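(* Let $S$ be a semigroup with identity element and group of units $G$, and suppose $S\setminus G$ is a subsemigroup of $S$. Then $G$ is a completely isolated subsemigroup of $S$, and the map $T\mapsto T\cup G$ is a bijection from the set of completely isolated subsemigroups of $S$ that are disjoint from $G$ onto the set of completely isolated subsemigroups of $S$ that contain $G$ as a proper subsemigroup.
   Context: A subsemigroup $T$ of a semigroup $S$ is completely isolated if for all $a,b\in S$, $ab\in T$ implies $a\in T$ or $b\in T$. *)

theory Defs
  imports "HOL-Algebra.Group"
begin

definition subsemigroup :: "('a, 'b) monoid_scheme \<Rightarrow> 'a set \<Rightarrow> bool" where
  "subsemigroup S T \<longleftrightarrow> T \<noteq> {} \<and> T \<subseteq> carrier S \<and>
     (\<forall>a\<in>T. \<forall>b\<in>T. a \<otimes>\<^bsub>S\<^esub> b \<in> T)"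

definition completely_isolated :: "('a, 'b) monoid_scheme \<Rightarrow> 'a set \<Rightarrow> bool" where
  "completely_isolated S T \<longleftrightarrow> subsemigroup S T \<and>
     (\<forall>a\<in>carrier S. \<forall>b\<in>carrier S. a \<otimes>\<^bsub>S\<^esub> b \<in> T \<longrightarrow> a \<in> T \<or> b \<in> T)"

end

theory Submission
  imports Defs
begin

text \<open>Write \<open>G\<close> for the group of units. The hypothesis says that a product of two non-units is
a non-unit, so \<open>G\<close> is completely isolated. A completely isolated \<open>T\<close> disjoint from \<open>G\<close> absorbs
multiplication by units on either side (from \<open>t = (t g) g\<inverse>\<close> and \<open>g\<inverse> \<notin> T\<close>), which makes \<open>T \<union> G\<close>
closed and completely isolated. Conversely, if \<open>G \<subset> U\<close> with \<open>U\<close> completely isolated, then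
\<open>U - G\<close> is closed by the hypothesis, and \<open>a b \<in> U - G\<close> with \<open>a \<in> G\<close> forces
\<open>b = a\<inverse> (a b) \<in> U - G\<close>. Hence \<open>T \<mapsto> T \<union> G\<close> and \<open>U \<mapsto> U - G\<close> are mutually inverse.\<close>

lemma subsemigroup_m_closed:
  "subsemigroup S T \<Longrightarrow> a \<in> T \<Longrightarrow> b \<in> T \<Longrightarrow> a \<otimes>\<^bsub>S\<^esub> b \<in> T"
  unfolding subsemigroup_def by blast

lemma completely_isolatedD:
  assumes "completely_isolated S T" "a \<in> carrier S" "b \<in> carrier S" "a \<otimes>\<^bsub>S\<^esub> b \<in> T"
  shows "a \<in> T \<or> b \<in> T"
  using assms unfolding completely_isolated_def by blast

lemma completely_isolated_subsemigroup:
  "completely_isolated S T \<Longrightarrow> subsemigroup S T"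
  unfolding completely_isolated_def by blast

lemma (in monoid) completely_isolated_Units:
  assumes "subsemigroup G (carrier G - Units G)"
  shows "completely_isolated G (Units G)"
  using assms Units_closed
  unfolding completely_isolated_def subsemigroup_def by blast

lemma (in monoid) completely_isolated_disjoint_Units_r_cancel:
  assumes "completely_isolated G T" "T \<inter> Units G = {}"
    and "x \<in> carrier G" "u \<in> Units G"
  shows "x \<otimes> u \<in> T \<longleftrightarrow> x \<in> T"
proof
  show "x \<otimes> u \<in> T \<Longrightarrow> x \<in> T"
    using completely_isolatedD[OF assms(1)] assms by blast
  assume "x \<in> T"
  moreover have "x = (x \<otimes> u) \<otimes> inv u"
    using assms(3,4) by (simp add: m_assoc Units_closed[OF assms(4)])
  ultimately have "x \<otimes> u \<in> T \<or> inv u \<in> T"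
    using completely_isolatedD[OF assms(1)] assms(3,4) by (metis Units_closed Units_inv_closed m_closed)
  then show "x \<otimes> u \<in> T"
    using assms(2,4) by blast
qed

lemma (in monoid) completely_isolated_disjoint_Units_l_cancel:
  assumes "completely_isolated G T" "T \<inter> Units G = {}"
    and "x \<in> carrier G" "u \<in> Units G"
  shows "u \<otimes> x \<in> T \<longleftrightarrow> x \<in> T"
proof
  show "u \<otimes> x \<in> T \<Longrightarrow> x \<in> T"
    using completely_isolatedD[OF assms(1)] assms by blast
  assume "x \<in> T"
  moreover have "x = inv u \<otimes> (u \<otimes> x)"
    using assms(3,4) by (simp add: m_assoc[symmetric] Units_closed[OF assms(4)])
  ultimately have "inv u \<in> T \<or> u \<otimes> x \<in> T"
    using completely_isolatedD[OF assms(1)] assms(3,4) by (metis Units_closed Units_inv_closed m_closed)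
  then show "u \<otimes> x \<in> T"
    using assms(2,4) by blast
qed

lemma (in monoid) subsemigroup_Units_l_cancel:
  assumes "subsemigroup G U" "Units G \<subseteq> U"
    and "x \<in> carrier G" "u \<in> Units G" "u \<otimes> x \<in> U"
  shows "x \<in> U"
proof -
  have "x = inv u \<otimes> (u \<otimes> x)"
    using assms(3,4) by (simp add: m_assoc[symmetric] Units_closed[OF assms(4)])
  then show ?thesis
    using assms subsemigroup_m_closed by (metis Units_inv_Units subsetD)
qed

lemma (in monoid) subsemigroup_Units_r_cancel:
  assumes "subsemigroup G U" "Units G \<subseteq> U"
    and "x \<in> carrier G" "u \<in> Units G" "x \<otimes> u \<in> U"
  shows "x \<in> U"
proof -
  have "x = (x \<otimes> u) \<otimes> inv u"
    using assms(3,4) by (simp add: m_assoc Units_closed[OF assms(4)])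
  then show ?thesis
    using assms subsemigroup_m_closed by (metis Units_inv_Units subsetD)
qed

lemma (in monoid) completely_isolated_Un_Units:
  assumes Units_isolated: "completely_isolated G (Units G)"
    and T: "completely_isolated G T" "T \<inter> Units G = {}"
  shows "completely_isolated G (T \<union> Units G)"
proof -
  have sub: "subsemigroup G T"
    using T(1) by (rule completely_isolated_subsemigroup)
  then have T_carrier: "T \<subseteq> carrier G"
    unfolding subsemigroup_def by blast
  have "a \<otimes> b \<in> T \<union> Units G" if a: "a \<in> T \<union> Units G" and b: "b \<in> T \<union> Units G" for a b
  proof (cases "a \<in> T")
    case True
    with b T_carrier show ?thesis
      using completely_isolated_disjoint_Units_r_cancel[OF T] subsemigroup_m_closed[OF sub]
      by (metis Un_iff subsetD)
  next
    case False
    with a have "a \<in> Units G" by blast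
    with b T_carrier show ?thesis
      using completely_isolated_disjoint_Units_l_cancel[OF T] by (metis Un_iff Units_m_closed subsetD)
  qed
  moreover have "a \<in> T \<union> Units G \<or> b \<in> T \<union> Units G"
    if "a \<in> carrier G" "b \<in> carrier G" "a \<otimes> b \<in> T \<union> Units G" for a b
    using that completely_isolatedD[OF T(1)] completely_isolatedD[OF Units_isolated] by blast
  moreover have "T \<union> Units G \<noteq> {}" "T \<union> Units G \<subseteq> carrier G"
    using T_carrier by auto
  ultimately show ?thesis
    unfolding completely_isolated_def subsemigroup_def by blast
qed

lemma (in monoid) completely_isolated_Diff_Units:
  assumes nonunits: "subsemigroup G (carrier G - Units G)"
    and U: "completely_isolated G U" "Units G \<subset> U"
  shows "completely_isolated G (U - Units G)"
proof -
  have sub: "subsemigroup G U"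
    using U(1) by (rule completely_isolated_subsemigroup)
  have "a \<in> U - Units G \<or> b \<in> U - Units G"
    if ab: "a \<in> carrier G" "b \<in> carrier G" "a \<otimes> b \<in> U - Units G" for a b
  proof -
    have "a \<in> U \<or> b \<in> U"
      using completely_isolatedD[OF U(1) ab(1,2)] ab(3) by blast
    moreover have "b \<in> U" if "a \<in> Units G"
      using subsemigroup_Units_l_cancel[OF sub _ ab(2) that] U(2) ab(3) by blast
    moreover have "a \<in> U" if "b \<in> Units G"
      using subsemigroup_Units_r_cancel[OF sub _ ab(1) that] U(2) ab(3) by blast
    moreover have "\<not> (a \<in> Units G \<and> b \<in> Units G)"
      using ab(3) by blast
    ultimately show ?thesis
      by blast
  qed
  moreover have "a \<otimes> b \<in> U - Units G" if "a \<in> U - Units G" "b \<in> U - Units G" for a b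
    using that subsemigroup_m_closed[OF sub] subsemigroup_m_closed[OF nonunits] sub
    unfolding subsemigroup_def by blast
  moreover have "U - Units G \<noteq> {}" "U - Units G \<subseteq> carrier G"
    using U(2) sub unfolding subsemigroup_def by blast+
  ultimately show ?thesis
    unfolding completely_isolated_def subsemigroup_def by blast
qed

theorem mainTheorem19:
  fixes S :: "('a, 'b) monoid_scheme"
  assumes "monoid S"
    and "subsemigroup S (carrier S - Units S)"
  shows "completely_isolated S (Units S) \<and>
         bij_betw (\<lambda>T. T \<union> Units S)
           {T. completely_isolated S T \<and> T \<inter> Units S = {}}
           {T. completely_isolated S T \<and> Units S \<subset> T}"
proof
  interpret monoid S by fact
  show Units_isolated: "completely_isolated S (Units S)"
    using assms(2) by (rule completely_isolated_Units)
  have nonempty: "T \<noteq> {}" if "completely_isolated S T" for T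
    using that unfolding completely_isolated_def subsemigroup_def by blast
  show "bij_betw (\<lambda>T. T \<union> Units S)
          {T. completely_isolated S T \<and> T \<inter> Units S = {}}
          {T. completely_isolated S T \<and> Units S \<subset> T}"
  proof (rule bij_betw_byWitness[where f' = "\<lambda>U. U - Units S"])
    show "(\<lambda>T. T \<union> Units S) ` {T. completely_isolated S T \<and> T \<inter> Units S = {}}
        \<subseteq> {T. completely_isolated S T \<and> Units S \<subset> T}"
      using completely_isolated_Un_Units[OF Units_isolated] nonempty by blast
    show "(\<lambda>U. U - Units S) ` {T. completely_isolated S T \<and> Units S \<subset> T}
        \<subseteq> {T. completely_isolated S T \<and> T \<inter> Units S = {}}"
      using completely_isolated_Diff_Units[OF assms(2)] by blast
  qed blast+
qed

end
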